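(* Let $K$ be a field, $Q$ a type $A$ quiver of arbitrary orientation, $\mathbf{d}$ a dimension vector for $Q$, and let $\tilde Q$, $\tilde{\mathbf{d}}$, $G^*$, $U$ and $\pi\colon U\to\mathrm{rep}_Q(\mathbf{d})$ be as described below. Then $\pi$ induces a bijection between the $\mathbf{GL}(\tilde{\mathbf{d}})$-orbits in $U$ and the $\mathbf{GL}(\mathbf{d})$-orbits in $\mathrm{rep}_Q(\mathbf{d})$ (namely $\mathcal{O}\mapsto \pi^{-1}(\mathcal{O})$ is inverse to $\mathcal{O}'\mapsto\pi(\mathcal{O}')$), and likewise a bijection between orbit closures in $U$ and orbit closures in $\mathrm{rep}_Q(\mathbf{d})$. Moreover, for each orbit $\mathcal{O}\subseteq\mathrm{rep}_Q(\mathbf{d})$, the closure of $\pi^{-1}(\mathcal{O})$ in $U$ is isomorphic to $G^*\times\overline{\mathcal{O}}$.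
   Context: Label the vertices of $Q$ along the line as $z_0,\dots,z_n$ and the arrows as $\gamma_1,\dots,\gamma_n$, with $\gamma_i$ joining $z_{i-1}$ and $z_i$ (in either direction). $\mathrm{rep}_Q(\mathbf{d})=\prod_{a}\mathrm{Mat}_{\mathbf{d}(ha)\times\mathbf{d}(ta)}(K)$ with $\mathbf{GL}(\mathbf{d})=\prod_v\mathbf{GL}_{\mathbf{d}(v)}(K)$ acting by $g\cdot V=(g_{ha}V_ag_{ta}^{-1})_a$. The quiver $\tilde Q$ is obtained from $Q$ as follows: for each $i$ with $z_{i-1}\xrightarrow{\gamma_i}z_i\xrightarrow{\gamma_{i+1}}z_{i+1}$, add a new vertex $w_i$ and arrow $\delta_i$ and replace $\gamma_i$ by $\gamma_i\colon z_{i-1}\to w_i$, with $\delta_i\colon z_i\to w_i$ (a new sink); for each $i$ with $z_{i-1}\xleftarrow{\gamma_i}z_i\xleftarrow{\gamma_{i+1}}z_{i+1}$, add a new vertex $w_i$ and arrow $\delta_i$ and replace $\gamma_i$ by $\gamma_i\colon w_i\to z_{i-1}$, with $\delta_i\colon w_i\to z_i$ (a new source). All other arrows are kept; $\tilde Q$ is a bipartite type $A$ quiver. Set $\tilde{\mathbf{d}}(z_i)=\mathbf{d}(z_i)$, $\tilde{\mathbf{d}}(w_i)=\mathbf{d}(z_i)$, and $G^*=\prod_i\mathbf{GL}_{\tilde{\mathbf{d}}(w_i)}(K)$, so $\mathbf{GL}(\tilde{\mathbf{d}})=G^*\times\mathbf{GL}(\mathbf{d})$. Let $U\subseteq\mathrm{rep}_{\tilde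 Q}(\tilde{\mathbf{d}})$ be the open set of $\tilde V$ with every $V_{\delta_i}$ invertible, and define $\pi(\tilde V)=(X_{\gamma_i})_i$ where $X_{\gamma_i}=V_{\gamma_i}$ if no $w_i$ was inserted, $X_{\gamma_i}=V_{\delta_i}^{-1}V_{\gamma_i}$ in the new-sink case, and $X_{\gamma_i}=V_{\gamma_i}V_{\delta_i}^{-1}$ in the new-source case. *)

theory Defs
  imports "Jordan_Normal_Form.Matrix"
begin

record ('v, 'e) quiver =
  qverts :: "'v set"
  qarrs  :: "'e set"
  qsrc   :: "'e \<Rightarrow> 'v"
  qtgt   :: "'e \<Rightarrow> 'v"

definition minv :: "'a::field mat \<Rightarrow> 'a mat" where
  "minv A = (SOME B. B \<in> carrier_mat (dim_row A) (dim_row A) \<and> inverts_mat A B \<and> inverts_mat B A)"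

text \<open>rep_Q(d) = prod_a Mat_{d(ha) x d(ta)}(K); arrows outside the quiver carry a dummy value.\<close>
definition rep_space :: "('v, 'e) quiver \<Rightarrow> ('v \<Rightarrow> nat) \<Rightarrow> ('e \<Rightarrow> 'a::field mat) set" where
  "rep_space Q d = {V. (\<forall>a\<in>qarrs Q. V a \<in> carrier_mat (d (qtgt Q a)) (d (qsrc Q a)))
                      \<and> (\<forall>a. a \<notin> qarrs Q \<longrightarrow> V a = 0\<^sub>m 0 0)}"

definition GL :: "('v, 'e) quiver \<Rightarrow> ('v \<Rightarrow> nat) \<Rightarrow> ('v \<Rightarrow> 'a::field mat) set" where
  "GL Q d = {g. (\<forall>v\<in>qverts Q. g v \<in> carrier_mat (d v) (d v) \<and> invertible_mat (g v))
               \<and> (\<forall>v. v \<notin> qverts Q \<longrightarrow> g v = 1\<^sub>m 0)}"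

definition act :: "('v, 'e) quiver \<Rightarrow> ('v \<Rightarrow> 'a::field mat) \<Rightarrow> ('e \<Rightarrow> 'a mat) \<Rightarrow> ('e \<Rightarrow> 'a mat)" where
  "act Q g V = (\<lambda>a. if a \<in> qarrs Q then g (qtgt Q a) * V a * minv (g (qsrc Q a)) else V a)"

definition orbit :: "('v, 'e) quiver \<Rightarrow> ('v \<Rightarrow> nat) \<Rightarrow> ('e \<Rightarrow> 'a::field mat) \<Rightarrow> ('e \<Rightarrow> 'a mat) set" where
  "orbit Q d V = {act Q g V | g. g \<in> GL Q d}"

definition orbits_in :: "('v, 'e) quiver \<Rightarrow> ('v \<Rightarrow> nat) \<Rightarrow> ('e \<Rightarrow> 'a::field mat) set \<Rightarrow> ('e \<Rightarrow> 'a mat) set set" where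
  "orbits_in Q d S = {orbit Q d V | V. V \<in> S}"

text \<open>An affine space is described by its set of coordinate functions C; polynomial
  functions are generated by constants and coordinates under + and *.\<close>
inductive_set polys :: "('p \<Rightarrow> 'a::comm_ring_1) set \<Rightarrow> ('p \<Rightarrow> 'a) set" for C where
  const: "(\<lambda>_. c) \<in> polys C"
| coord: "f \<in> C \<Longrightarrow> f \<in> polys C"
| add:   "f \<in> polys C \<Longrightarrow> g \<in> polys C \<Longrightarrow> (\<lambda>x. f x + g x) \<in> polys C"
| mult:  "f \<in> polys C \<Longrightarrow> g \<in> polys C \<Longrightarrow> (\<lambda>x. f x * g x) \<in> polys C"

definition zcl :: "('p \<Rightarrow> 'a::comm_ring_1) set \<Rightarrow> 'p set \<Rightarrow> 'p set \<Rightarrow> 'p set" where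
  "zcl C X A = {x \<in> X. \<forall>f \<in> polys C. (\<forall>y\<in>A. f y = 0) \<longrightarrow> f x = 0}"

definition regular_fun :: "('p \<Rightarrow> 'a::field) set \<Rightarrow> 'p set \<Rightarrow> ('p \<Rightarrow> 'a) \<Rightarrow> bool" where
  "regular_fun C X f \<longleftrightarrow> (\<forall>x\<in>X. \<exists>p\<in>polys C. \<exists>q\<in>polys C. q x \<noteq> 0 \<and>
       (\<forall>y\<in>X. q y \<noteq> 0 \<longrightarrow> f y = p y / q y))"

definition regular_map :: "('p \<Rightarrow> 'a::field) set \<Rightarrow> 'p set \<Rightarrow> ('q \<Rightarrow> 'a) set \<Rightarrow> 'q set \<Rightarrow> ('p \<Rightarrow> 'q) \<Rightarrow> bool" where
  "regular_map C X D Y f \<longleftrightarrow> f ` X \<subseteq> Y \<and> (\<forall>c\<in>D. regular_fun C X (\<lambda>x. c (f x)))"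

definition var_iso :: "('p \<Rightarrow> 'a::field) set \<Rightarrow> 'p set \<Rightarrow> ('q \<Rightarrow> 'a) set \<Rightarrow> 'q set \<Rightarrow> bool" where
  "var_iso C X D Y \<longleftrightarrow> (\<exists>f g. regular_map C X D Y f \<and> regular_map D Y C X g
       \<and> (\<forall>x\<in>X. g (f x) = x) \<and> (\<forall>y\<in>Y. f (g y) = y))"

definition rep_coords :: "('v, 'e) quiver \<Rightarrow> ('v \<Rightarrow> nat) \<Rightarrow> (('e \<Rightarrow> 'a mat) \<Rightarrow> 'a) set" where
  "rep_coords Q d = {(\<lambda>V. V a $$ (i, j)) | a i j. a \<in> qarrs Q \<and> i < d (qtgt Q a) \<and> j < d (qsrc Q a)}"

definition prod_coords :: "('p \<Rightarrow> 'a) set \<Rightarrow> ('q \<Rightarrow> 'a) set \<Rightarrow> ('p \<times> 'q \<Rightarrow> 'a) set" where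
  "prod_coords C D = {(\<lambda>x. f (fst x)) | f. f \<in> C} \<union> {(\<lambda>x. g (snd x)) | g. g \<in> D}"

text \<open>Vertices z_0..z_n (numbers 0..n), arrows gamma_1..gamma_n (numbers 1..n);
  fw i means gamma_i : z_{i-1} -> z_i, otherwise gamma_i : z_i -> z_{i-1}.\<close>
definition typeA :: "nat \<Rightarrow> (nat \<Rightarrow> bool) \<Rightarrow> (nat, nat) quiver" where
  "typeA n fw = \<lparr> qverts = {0..n}, qarrs = {1..n},
                  qsrc = (\<lambda>i. if fw i then i - 1 else i),
                  qtgt = (\<lambda>i. if fw i then i else i - 1) \<rparr>"

definition sinkW :: "nat \<Rightarrow> (nat \<Rightarrow> bool) \<Rightarrow> nat set" where
  "sinkW n fw = {i. 1 \<le> i \<and> i + 1 \<le> n \<and> fw i \<and> fw (i + 1)}"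

definition sourceW :: "nat \<Rightarrow> (nat \<Rightarrow> bool) \<Rightarrow> nat set" where
  "sourceW n fw = {i. 1 \<le> i \<and> i + 1 \<le> n \<and> \<not> fw i \<and> \<not> fw (i + 1)}"

definition Wset :: "nat \<Rightarrow> (nat \<Rightarrow> bool) \<Rightarrow> nat set" where
  "Wset n fw = sinkW n fw \<union> sourceW n fw"

text \<open>Vertices: Inl i = z_i, Inr i = w_i; arrows: Inl i = gamma_i, Inr i = delta_i.\<close>
definition tildeQ :: "nat \<Rightarrow> (nat \<Rightarrow> bool) \<Rightarrow> (nat + nat, nat + nat) quiver" where
  "tildeQ n fw = \<lparr> qverts = Inl ` {0..n} \<union> Inr ` Wset n fw,
                   qarrs = Inl ` {1..n} \<union> Inr ` Wset n fw,
                   qsrc = (\<lambda>a. case a of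
                              Inl i \<Rightarrow> (if i \<in> sinkW n fw then Inl (i - 1)
                                        else if i \<in> sourceW n fw then Inr i
                                        else Inl (qsrc (typeA n fw) i))
                            | Inr i \<Rightarrow> (if i \<in> sinkW n fw then Inl i else Inr i)),
                   qtgt = (\<lambda>a. case a of
                              Inl i \<Rightarrow> (if i \<in> sinkW n fw then Inr i
                                        else if i \<in> sourceW n fw then Inl (i - 1)
                                        else Inl (qtgt (typeA n fw) i))
                            | Inr i \<Rightarrow> (if i \<in> sinkW n fw then Inr i else Inl i)) \<rparr>"

definition tilde_dim :: "(nat \<Rightarrow> nat) \<Rightarrow> (nat + nat \<Rightarrow> nat)" where
  "tilde_dim d = (\<lambda>v. case v of Inl i \<Rightarrow> d i | Inr i \<Rightarrow> d i)"

definition Gstar :: "nat \<Rightarrow> (nat \<Rightarrow> bool) \<Rightarrow> (nat \<Rightarrow> nat) \<Rightarrow> (nat \<Rightarrow> 'a::field mat) set" where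
  "Gstar n fw d = {g. (\<forall>i\<in>Wset n fw. g i \<in> carrier_mat (d i) (d i) \<and> invertible_mat (g i))
                     \<and> (\<forall>i. i \<notin> Wset n fw \<longrightarrow> g i = 1\<^sub>m 0)}"

definition Gstar_coords :: "nat \<Rightarrow> (nat \<Rightarrow> bool) \<Rightarrow> (nat \<Rightarrow> nat) \<Rightarrow> ((nat \<Rightarrow> 'a mat) \<Rightarrow> 'a) set" where
  "Gstar_coords n fw d = {(\<lambda>g. g i $$ (r, c)) | i r c. i \<in> Wset n fw \<and> r < d i \<and> c < d i}"

definition Uset :: "nat \<Rightarrow> (nat \<Rightarrow> bool) \<Rightarrow> (nat \<Rightarrow> nat) \<Rightarrow> (nat + nat \<Rightarrow> 'a::field mat) set" where
  "Uset n fw d = {V \<in> rep_space (tildeQ n fw) (tilde_dim d). \<forall>i\<in>Wset n fw. invertible_mat (V (Inr i))}"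

definition piQ :: "nat \<Rightarrow> (nat \<Rightarrow> bool) \<Rightarrow> (nat + nat \<Rightarrow> 'a::field mat) \<Rightarrow> (nat \<Rightarrow> 'a mat)" where
  "piQ n fw V = (\<lambda>i. if i \<in> {1..n} then
                       (if i \<in> sinkW n fw then minv (V (Inr i)) * V (Inl i)
                        else if i \<in> sourceW n fw then V (Inl i) * minv (V (Inr i))
                        else V (Inl i))
                     else 0\<^sub>m 0 0)"

end

theory Submission
  imports Defs "Jordan_Normal_Form.Determinant"
begin

text \<open>Over \<open>U\<close> every \<open>V\<^sub>\<delta>\<^sub>i\<close> is invertible, so by Cramer's rule \<open>V \<mapsto> ((V\<^sub>\<delta>\<^sub>i)\<^sub>i, \<pi> V)\<close> is a
  rational isomorphism of \<open>U\<close> onto \<open>G\<^sup>* \<times> rep\<^sub>Q(d)\<close>. Its inverse \<open>(g, X) \<mapsto> V\<close>, with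
  \<open>V\<^sub>\<gamma>\<^sub>i = g\<^sub>i X\<^sub>\<gamma>\<^sub>i\<close> at a new sink and \<open>X\<^sub>\<gamma>\<^sub>i g\<^sub>i\<close> at a new source, is polynomial, and \<open>\<pi>\<close> becomes
  the second projection. Hence \<open>\<pi>\<close>-preimages commute with Zariski closure, and the closure of
  \<open>\<pi>\<^sup>-\<^sup>1(O)\<close> is \<open>G\<^sup>* \<times> closure(O)\<close>. On the group side, \<open>\<pi>\<close> is equivariant along the projection of
  \<open>GL(d\<^sup>~)\<close> onto its factor \<open>GL(d)\<close> at the vertices \<open>z\<^sub>i\<close>, and if the images of two points of \<open>U\<close>
  are related by \<open>k \<in> GL(d)\<close>, a suitable lift of \<open>k\<close> also matches their \<open>\<delta>\<close>-arrows; so the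
  preimage of an orbit is a single orbit.\<close>

section \<open>Inverse matrices\<close>

lemma assoc_mult_mat_dim:
  "dim_col A = dim_row B \<Longrightarrow> dim_col B = dim_row C \<Longrightarrow> A * B * C = A * (B * (C::'a::semiring_0 mat))"
  by (rule assoc_mult_mat[of A "dim_row A" "dim_col A" B "dim_col B" C "dim_col C"]) auto

lemma left_mult_one_mat_dim: "dim_row A = k \<Longrightarrow> 1\<^sub>m k * A = (A::'a::semiring_1 mat)"
  by (rule left_mult_one_mat[of A k "dim_col A"]) auto

lemma right_mult_one_mat_dim: "dim_col A = k \<Longrightarrow> A * 1\<^sub>m k = (A::'a::semiring_1 mat)"
  by (rule right_mult_one_mat[of A "dim_row A" k]) auto

lemma invertible_matI:
  fixes A B :: "'a::field mat"
  assumes "A \<in> carrier_mat k k" "B \<in> carrier_mat k k" "A * B = 1\<^sub>m k" "B * A = 1\<^sub>m k"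
  shows "invertible_mat A"
  using assms unfolding invertible_mat_def inverts_mat_def square_mat.simps by auto

lemma minv_eqI:
  fixes A B :: "'a::field mat"
  assumes A: "A \<in> carrier_mat k k" and B: "B \<in> carrier_mat k k"
    and AB: "A * B = 1\<^sub>m k" and BA: "B * A = 1\<^sub>m k"
  shows "minv A = B"
proof -
  have "B \<in> carrier_mat (dim_row A) (dim_row A) \<and> inverts_mat A B \<and> inverts_mat B A"
    using A B AB BA by (auto simp: inverts_mat_def)
  then have "minv A \<in> carrier_mat (dim_row A) (dim_row A) \<and> inverts_mat A (minv A) \<and> inverts_mat (minv A) A"
    unfolding minv_def by (rule someI)
  then have C: "minv A \<in> carrier_mat k k" "minv A * A = 1\<^sub>m k"
    using A by (auto simp: inverts_mat_def)
  have "minv A = minv A * (A * B)" using C AB by simp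
  also have "\<dots> = (minv A * A) * B" using assoc_mult_mat[OF C(1) A B] by simp
  also have "\<dots> = B" using C B by simp
  finally show ?thesis .
qed

lemma minv_mat:
  fixes A :: "'a::field mat"
  assumes A: "A \<in> carrier_mat k k" and "invertible_mat A"
  shows "minv A \<in> carrier_mat k k" "A * minv A = 1\<^sub>m k" "minv A * A = 1\<^sub>m k"
proof -
  obtain B where AB: "A * B = 1\<^sub>m k" and BA: "B * A = 1\<^sub>m (dim_row B)"
    using assms unfolding invertible_mat_def inverts_mat_def by auto
  have B: "B \<in> carrier_mat k k"
    using arg_cong[OF AB, of dim_col] arg_cong[OF BA, of dim_col] A by auto
  with A AB BA have "minv A = B" by (intro minv_eqI) auto
  with B AB BA show "minv A \<in> carrier_mat k k" "A * minv A = 1\<^sub>m k" "minv A * A = 1\<^sub>m k"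
    by auto
qed

lemma invertible_one_mat: "invertible_mat (1\<^sub>m k :: 'a::field mat)"
  using invertible_matI[of "1\<^sub>m k" k "1\<^sub>m k"] by auto

lemma minv_minv:
  fixes A :: "'a::field mat"
  assumes "A \<in> carrier_mat k k" "invertible_mat A"
  shows "invertible_mat (minv A)" "minv (minv A) = A"
  using minv_mat[OF assms] invertible_matI[of "minv A" k A] minv_eqI[of "minv A" k A] assms by auto

lemma minv_mult:
  fixes A B :: "'a::field mat"
  assumes A: "A \<in> carrier_mat k k" "invertible_mat A" and B: "B \<in> carrier_mat k k" "invertible_mat B"
  shows "invertible_mat (A * B)" "minv (A * B) = minv B * minv A"
proof -
  note a = minv_mat[OF A] and b = minv_mat[OF B]
  have 1: "(A * B) * (minv B * minv A) = 1\<^sub>m k"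
    using A B a b by (simp add: assoc_mult_mat_dim left_mult_one_mat_dim flip: assoc_mult_mat_dim[of B "minv B"])
  have 2: "(minv B * minv A) * (A * B) = 1\<^sub>m k"
    using A B a b by (simp add: assoc_mult_mat_dim left_mult_one_mat_dim flip: assoc_mult_mat_dim[of "minv A" A])
  show "invertible_mat (A * B)" using invertible_matI[OF _ _ 1 2] A B a b by auto
  show "minv (A * B) = minv B * minv A" using minv_eqI[OF _ _ 1 2] A B a b by auto
qed

lemma minv_mult3:
  fixes A B C :: "'a::field mat"
  assumes A: "A \<in> carrier_mat k k" "invertible_mat A" and B: "B \<in> carrier_mat k k" "invertible_mat B"
    and C: "C \<in> carrier_mat k k" "invertible_mat C"
  shows "invertible_mat (A * B * C)" "minv (A * B * C) = minv C * minv B * minv A"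
  using minv_mult[OF A B] minv_mult[of "A * B" k C] minv_mat(1)[OF A] minv_mat(1)[OF B] minv_mat(1)[OF C] A B C
  by (auto simp: assoc_mult_mat_dim)

lemma minv_cancel:
  fixes A Y :: "'a::field mat"
  assumes "A \<in> carrier_mat k k" "invertible_mat A"
  shows "dim_row Y = k \<Longrightarrow> minv A * (A * Y) = Y"
    and "dim_row Y = k \<Longrightarrow> A * (minv A * Y) = Y"
    and "dim_col Y = k \<Longrightarrow> Y * A * minv A = Y"
    and "dim_col Y = k \<Longrightarrow> Y * minv A * A = Y"
  using minv_mat[OF assms] assms
  by (simp_all add: left_mult_one_mat_dim flip: assoc_mult_mat_dim)
    (simp_all add: assoc_mult_mat_dim right_mult_one_mat_dim)

lemma minv_conj:
  fixes A B C :: "'a::field mat"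
  assumes A: "A \<in> carrier_mat k k" "invertible_mat A" and B: "B \<in> carrier_mat k k" "invertible_mat B"
    and C: "C \<in> carrier_mat k k" "invertible_mat C"
  shows "minv (A * B * minv C) = C * minv B * minv A"
  using minv_mult3(2)[OF A B minv_mat(1)[OF C] minv_minv(1)[OF C]] minv_minv(2)[OF C] by simp

lemma minv_conj_mult_conj:
  fixes A B C D Y :: "'a::field mat"
  assumes A: "A \<in> carrier_mat k k" "invertible_mat A" and B: "B \<in> carrier_mat k k" "invertible_mat B"
    and C: "C \<in> carrier_mat k k" "invertible_mat C" and D: "D \<in> carrier_mat m m" "invertible_mat D"
    and Y: "Y \<in> carrier_mat k m"
  shows "minv (A * B * minv C) * (A * Y * minv D) = C * (minv B * Y) * minv D"
proof -
  note inv = minv_mat[OF A] minv_mat[OF B] minv_mat[OF C] minv_mat[OF D]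
  have "minv (A * B * minv C) * (A * Y * minv D) = C * (minv B * (minv A * (A * (Y * minv D))))"
    unfolding minv_conj[OF A B C] using A B C D Y inv by (simp add: assoc_mult_mat_dim)
  also have "\<dots> = C * (minv B * Y) * minv D"
    using A B C D Y inv by (simp add: minv_cancel(1)[OF A] assoc_mult_mat_dim)
  finally show ?thesis .
qed

lemma conj_mult_minv_conj:
  fixes A B C D Y :: "'a::field mat"
  assumes A: "A \<in> carrier_mat k k" "invertible_mat A" and B: "B \<in> carrier_mat k k" "invertible_mat B"
    and C: "C \<in> carrier_mat k k" "invertible_mat C" and D: "D \<in> carrier_mat m m" "invertible_mat D"
    and Y: "Y \<in> carrier_mat m k"
  shows "(D * Y * minv A) * minv (C * B * minv A) = D * (Y * minv B) * minv C"
proof -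
  note inv = minv_mat[OF A] minv_mat[OF B] minv_mat[OF C] minv_mat[OF D]
  have "(D * Y * minv A) * minv (C * B * minv A) = D * (Y * (minv A * (A * (minv B * minv C))))"
    unfolding minv_conj[OF C B A] using A B C D Y inv by (simp add: assoc_mult_mat_dim)
  also have "\<dots> = D * (Y * minv B) * minv C"
    using A B C D Y inv by (simp add: minv_cancel(1)[OF A] assoc_mult_mat_dim)
  finally show ?thesis .
qed

lemma invertible_conj:
  fixes A B Y :: "'a::field mat"
  assumes "A \<in> carrier_mat k k" "invertible_mat A" "B \<in> carrier_mat k k" "invertible_mat B"
    "Y \<in> carrier_mat k k" "invertible_mat Y"
  shows "invertible_mat (A * Y * minv B)"
  using assms minv_mult3(1)[of A k Y "minv B"] minv_mat(1)[of B k] minv_minv(1)[of B k] by auto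

lemma mult_minv_conj_cancel:
  fixes A B C :: "'a::field mat"
  assumes A: "A \<in> carrier_mat k k" "invertible_mat A" and B: "B \<in> carrier_mat k k" "invertible_mat B"
    and C: "C \<in> carrier_mat k k" "invertible_mat C"
  shows "A * B * minv (minv C * A * B) = C"
proof -
  note inv = minv_mat[OF A] minv_mat[OF B] minv_mat[OF C]
  have "minv (minv C * A * B) = minv B * minv A * C"
    using minv_mult3(2)[OF minv_mat(1)[OF C] minv_minv(1)[OF C] A B] minv_minv(2)[OF C] by simp
  then have "A * B * minv (minv C * A * B) = A * (B * (minv B * (minv A * C)))"
    using A B C inv by (simp add: assoc_mult_mat_dim)
  also have "\<dots> = C"
    using A B C inv by (simp add: minv_cancel(2)[OF A] minv_cancel(2)[OF B])
  finally show ?thesis .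
qed

lemma invertible_det_nonzero:
  fixes A :: "'a::field mat"
  assumes "A \<in> carrier_mat k k" "invertible_mat A"
  shows "det A \<noteq> 0"
  using det_mult[OF assms(1) minv_mat(1)[OF assms]] minv_mat(2)[OF assms] by auto

lemma minv_adj_mat:
  fixes A :: "'a::field mat"
  assumes A: "A \<in> carrier_mat k k" and IA: "invertible_mat A"
  shows "minv A = (1 / det A) \<cdot>\<^sub>m adj_mat A"
proof (rule minv_eqI[OF A])
  have dA: "det A \<noteq> 0" using invertible_det_nonzero[OF A IA] .
  show "(1 / det A) \<cdot>\<^sub>m adj_mat A \<in> carrier_mat k k" using adj_mat(1)[OF A] by simp
  have "A * ((1 / det A) \<cdot>\<^sub>m adj_mat A) = (1 / det A) \<cdot>\<^sub>m (A * adj_mat A)"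
    using A adj_mat(1)[OF A] by (simp add: mult_smult_distrib)
  then show "A * ((1 / det A) \<cdot>\<^sub>m adj_mat A) = 1\<^sub>m k"
    unfolding adj_mat(2)[OF A] using dA by (auto intro!: eq_matI)
  have "(1 / det A) \<cdot>\<^sub>m adj_mat A * A = (1 / det A) \<cdot>\<^sub>m (adj_mat A * A)"
    using A adj_mat(1)[OF A] by (simp add: mult_smult_assoc_mat)
  then show "(1 / det A) \<cdot>\<^sub>m adj_mat A * A = 1\<^sub>m k"
    unfolding adj_mat(3)[OF A] using dA by (auto intro!: eq_matI)
qed

lemma minv_index:
  fixes A :: "'a::field mat"
  assumes "A \<in> carrier_mat k k" "invertible_mat A" "i < k" "j < k"
  shows "minv A $$ (i,j) = (-1)^(j+i) * det (mat_delete A j i) / det A"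
  using minv_adj_mat[OF assms(1,2)] assms by (simp add: adj_mat_def cofactor_def)

section \<open>Polynomial and rational functions on subsets of affine space\<close>

definition polynomial_on :: "('p \<Rightarrow> 'a::field) set \<Rightarrow> 'p set \<Rightarrow> ('p \<Rightarrow> 'a) \<Rightarrow> bool" where
  "polynomial_on C S f \<longleftrightarrow> (\<exists>p\<in>polys C. \<forall>x\<in>S. f x = p x)"

definition rational_on :: "('p \<Rightarrow> 'a::field) set \<Rightarrow> 'p set \<Rightarrow> ('p \<Rightarrow> 'a) \<Rightarrow> bool" where
  "rational_on C S f \<longleftrightarrow> (\<exists>p\<in>polys C. \<exists>q\<in>polys C. \<forall>x\<in>S. q x \<noteq> 0 \<and> f x = p x / q x)"

lemma polynomial_on_const: "polynomial_on C S (\<lambda>_. c)"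
  unfolding polynomial_on_def by (intro bexI[of _ "\<lambda>_. c"]) (auto intro: polys.const)

lemma polynomial_on_coord: "f \<in> C \<Longrightarrow> polynomial_on C S f"
  unfolding polynomial_on_def by (blast intro: polys.coord)

lemma polynomial_on_add:
  assumes "polynomial_on C S f" "polynomial_on C S g"
  shows "polynomial_on C S (\<lambda>x. f x + g x)"
proof -
  obtain p q where "p \<in> polys C" "q \<in> polys C" "\<forall>x\<in>S. f x = p x" "\<forall>x\<in>S. g x = q x"
    using assms unfolding polynomial_on_def by blast
  then show ?thesis
    unfolding polynomial_on_def by (intro bexI[of _ "\<lambda>x. p x + q x"]) (auto intro: polys.add)
qed

lemma polynomial_on_mult:
  assumes "polynomial_on C S f" "polynomial_on C S g"
  shows "polynomial_on C S (\<lambda>x. f x * g x)"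
proof -
  obtain p q where "p \<in> polys C" "q \<in> polys C" "\<forall>x\<in>S. f x = p x" "\<forall>x\<in>S. g x = q x"
    using assms unfolding polynomial_on_def by blast
  then show ?thesis
    unfolding polynomial_on_def by (intro bexI[of _ "\<lambda>x. p x * q x"]) (auto intro: polys.mult)
qed

lemma polynomial_on_cong: "polynomial_on C S f \<Longrightarrow> (\<And>x. x \<in> S \<Longrightarrow> f x = g x) \<Longrightarrow> polynomial_on C S g"
  unfolding polynomial_on_def by auto

lemma polynomial_on_subset: "polynomial_on C S f \<Longrightarrow> T \<subseteq> S \<Longrightarrow> polynomial_on C T f"
  unfolding polynomial_on_def by blast

lemma polynomial_on_sum:
  "finite I \<Longrightarrow> (\<And>k. k \<in> I \<Longrightarrow> polynomial_on C S (f k)) \<Longrightarrow> polynomial_on C S (\<lambda>x. \<Sum>k\<in>I. f k x)"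
  by (induction I rule: finite_induct) (auto intro: polynomial_on_const polynomial_on_add)

lemma polynomial_on_prod:
  "finite I \<Longrightarrow> (\<And>k. k \<in> I \<Longrightarrow> polynomial_on C S (f k)) \<Longrightarrow> polynomial_on C S (\<lambda>x. \<Prod>k\<in>I. f k x)"
  by (induction I rule: finite_induct) (auto intro: polynomial_on_const polynomial_on_mult)

lemma polynomial_on_comp:
  assumes "\<And>c. c \<in> D \<Longrightarrow> polynomial_on C S (\<lambda>x. c (h x))" and "p \<in> polys D"
  shows "polynomial_on C S (\<lambda>x. p (h x))"
  using assms(2) by induction (auto intro: assms(1) polynomial_on_const polynomial_on_add polynomial_on_mult)

lemma rational_on_polynomial:
  assumes "polynomial_on C S f"
  shows "rational_on C S f"
proof -
  obtain p where "p \<in> polys C" "\<forall>x\<in>S. f x = p x"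
    using assms unfolding polynomial_on_def by blast
  then show ?thesis unfolding rational_on_def
    by (intro bexI[of _ p] bexI[of _ "\<lambda>_. 1"]) (auto intro: polys.const)
qed

lemma rational_on_add:
  assumes "rational_on C S f" "rational_on C S g"
  shows "rational_on C S (\<lambda>x. f x + g x)"
proof -
  obtain p q p' q' where pq: "p \<in> polys C" "q \<in> polys C" "p' \<in> polys C" "q' \<in> polys C"
    and h: "\<forall>x\<in>S. q x \<noteq> 0 \<and> f x = p x / q x" "\<forall>x\<in>S. q' x \<noteq> 0 \<and> g x = p' x / q' x"
    using assms unfolding rational_on_def by blast
  have "\<forall>x\<in>S. q x * q' x \<noteq> 0 \<and> f x + g x = (p x * q' x + p' x * q x) / (q x * q' x)"
    using h by (auto simp: field_simps)
  with pq show ?thesis unfolding rational_on_def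
    by (intro bexI[of _ "\<lambda>x. p x * q' x + p' x * q x"] bexI[of _ "\<lambda>x. q x * q' x"])
      (auto intro: polys.add polys.mult)
qed

lemma rational_on_mult:
  assumes "rational_on C S f" "rational_on C S g"
  shows "rational_on C S (\<lambda>x. f x * g x)"
proof -
  obtain p q p' q' where pq: "p \<in> polys C" "q \<in> polys C" "p' \<in> polys C" "q' \<in> polys C"
    and h: "\<forall>x\<in>S. q x \<noteq> 0 \<and> f x = p x / q x" "\<forall>x\<in>S. q' x \<noteq> 0 \<and> g x = p' x / q' x"
    using assms unfolding rational_on_def by blast
  have "\<forall>x\<in>S. q x * q' x \<noteq> 0 \<and> f x * g x = (p x * p' x) / (q x * q' x)"
    using h by auto
  with pq show ?thesis unfolding rational_on_def
    by (intro bexI[of _ "\<lambda>x. p x * p' x"] bexI[of _ "\<lambda>x. q x * q' x"]) (auto intro: polys.mult)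
qed

lemma rational_on_divide:
  "polynomial_on C S f \<Longrightarrow> polynomial_on C S g \<Longrightarrow> (\<And>x. x \<in> S \<Longrightarrow> g x \<noteq> 0)
    \<Longrightarrow> rational_on C S (\<lambda>x. f x / g x)"
  unfolding polynomial_on_def rational_on_def by metis

lemma rational_on_cong: "rational_on C S f \<Longrightarrow> (\<And>x. x \<in> S \<Longrightarrow> f x = g x) \<Longrightarrow> rational_on C S g"
  unfolding rational_on_def by auto

lemma rational_on_subset: "rational_on C S f \<Longrightarrow> T \<subseteq> S \<Longrightarrow> rational_on C T f"
  unfolding rational_on_def by blast

lemma rational_on_sum:
  "finite I \<Longrightarrow> (\<And>k. k \<in> I \<Longrightarrow> rational_on C S (f k)) \<Longrightarrow> rational_on C S (\<lambda>x. \<Sum>k\<in>I. f k x)"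
  by (induction I rule: finite_induct)
    (auto intro: rational_on_polynomial[OF polynomial_on_const] rational_on_add)

lemma rational_on_comp:
  assumes "\<And>c. c \<in> D \<Longrightarrow> rational_on C S (\<lambda>x. c (h x))" and "p \<in> polys D"
  shows "rational_on C S (\<lambda>x. p (h x))"
  using assms(2) by induction
    (auto intro: assms(1) rational_on_polynomial[OF polynomial_on_const] rational_on_add rational_on_mult)

lemma rational_on_imp_regular_fun: "rational_on C S f \<Longrightarrow> regular_fun C S f"
  unfolding rational_on_def regular_fun_def by metis

definition polynomial_mat_on ::
    "('p \<Rightarrow> 'a::field) set \<Rightarrow> 'p set \<Rightarrow> nat \<Rightarrow> nat \<Rightarrow> ('p \<Rightarrow> 'a mat) \<Rightarrow> bool" where
  "polynomial_mat_on C S r c M \<longleftrightarrow> (\<forall>x\<in>S. M x \<in> carrier_mat r c)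
     \<and> (\<forall>i<r. \<forall>j<c. polynomial_on C S (\<lambda>x. M x $$ (i,j)))"

definition rational_mat_on ::
    "('p \<Rightarrow> 'a::field) set \<Rightarrow> 'p set \<Rightarrow> nat \<Rightarrow> nat \<Rightarrow> ('p \<Rightarrow> 'a mat) \<Rightarrow> bool" where
  "rational_mat_on C S r c M \<longleftrightarrow> (\<forall>x\<in>S. M x \<in> carrier_mat r c)
     \<and> (\<forall>i<r. \<forall>j<c. rational_on C S (\<lambda>x. M x $$ (i,j)))"

lemma rational_mat_on_polynomial: "polynomial_mat_on C S r c M \<Longrightarrow> rational_mat_on C S r c M"
  unfolding polynomial_mat_on_def rational_mat_on_def by (blast intro: rational_on_polynomial)

lemma index_mult_mat_sum:
  "A \<in> carrier_mat r m \<Longrightarrow> B \<in> carrier_mat m c \<Longrightarrow> i < r \<Longrightarrow> j < c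
    \<Longrightarrow> (A * B) $$ (i,j) = (\<Sum>k=0..<m. A $$ (i,k) * B $$ (k,j))"
  by (auto simp: scalar_prod_def)

lemma polynomial_mat_on_mult:
  assumes A: "polynomial_mat_on C S r m A" and B: "polynomial_mat_on C S m c B"
  shows "polynomial_mat_on C S r c (\<lambda>x. A x * B x)"
  unfolding polynomial_mat_on_def
proof (intro conjI ballI allI impI)
  show "A x * B x \<in> carrier_mat r c" if "x \<in> S" for x
    using A B that unfolding polynomial_mat_on_def by (meson mult_carrier_mat)
  fix i j assume ij: "i < r" "j < c"
  have "polynomial_on C S (\<lambda>x. \<Sum>k\<in>{0..<m}. A x $$ (i,k) * B x $$ (k,j))"
    using A B ij unfolding polynomial_mat_on_def by (auto intro!: polynomial_on_sum polynomial_on_mult)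
  then show "polynomial_on C S (\<lambda>x. (A x * B x) $$ (i,j))"
  proof (rule polynomial_on_cong)
    fix x assume "x \<in> S"
    with A B have "A x \<in> carrier_mat r m" "B x \<in> carrier_mat m c" unfolding polynomial_mat_on_def by blast+
    from index_mult_mat_sum[OF this ij]
    show "(\<Sum>k=0..<m. A x $$ (i,k) * B x $$ (k,j)) = (A x * B x) $$ (i,j)" ..
  qed
qed

lemma rational_mat_on_mult:
  assumes A: "rational_mat_on C S r m A" and B: "rational_mat_on C S m c B"
  shows "rational_mat_on C S r c (\<lambda>x. A x * B x)"
  unfolding rational_mat_on_def
proof (intro conjI ballI allI impI)
  show "A x * B x \<in> carrier_mat r c" if "x \<in> S" for x
    using A B that unfolding rational_mat_on_def by (meson mult_carrier_mat)
  fix i j assume ij: "i < r" "j < c"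
  have "rational_on C S (\<lambda>x. \<Sum>k\<in>{0..<m}. A x $$ (i,k) * B x $$ (k,j))"
    using A B ij unfolding rational_mat_on_def by (auto intro!: rational_on_sum rational_on_mult)
  then show "rational_on C S (\<lambda>x. (A x * B x) $$ (i,j))"
  proof (rule rational_on_cong)
    fix x assume "x \<in> S"
    with A B have "A x \<in> carrier_mat r m" "B x \<in> carrier_mat m c" unfolding rational_mat_on_def by blast+
    from index_mult_mat_sum[OF this ij]
    show "(\<Sum>k=0..<m. A x $$ (i,k) * B x $$ (k,j)) = (A x * B x) $$ (i,j)" ..
  qed
qed

lemma polynomial_on_det:
  assumes M: "polynomial_mat_on C S k k M"
  shows "polynomial_on C S (\<lambda>x. det (M x))"
proof (rule polynomial_on_cong)
  show "polynomial_on C S (\<lambda>x. \<Sum>p\<in>{p. p permutes {0..<k}}. signof p * (\<Prod>i=0..<k. M x $$ (i, p i)))"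
  proof (rule polynomial_on_sum)
    fix p assume "p \<in> {p. p permutes {0..<k}}"
    then have "\<And>i. i < k \<Longrightarrow> p i < k" using permutes_in_image by fastforce
    with M show "polynomial_on C S (\<lambda>x. signof p * (\<Prod>i=0..<k. M x $$ (i, p i)))"
      unfolding polynomial_mat_on_def
      by (intro polynomial_on_mult polynomial_on_const polynomial_on_prod) auto
  qed (simp add: finite_permutations)
  fix x assume "x \<in> S"
  with M have "M x \<in> carrier_mat k k" unfolding polynomial_mat_on_def by blast
  then show "(\<Sum>p\<in>{p. p permutes {0..<k}}. signof p * (\<Prod>i=0..<k. M x $$ (i, p i))) = det (M x)"
    by (simp add: det_def)
qed

lemma polynomial_mat_on_mat_delete:
  assumes M: "polynomial_mat_on C S k k M" and "i < k" "j < k"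
  shows "polynomial_mat_on C S (k - 1) (k - 1) (\<lambda>x. mat_delete (M x) i j)"
  unfolding polynomial_mat_on_def
proof (intro conjI ballI allI impI)
  show "mat_delete (M x) i j \<in> carrier_mat (k - 1) (k - 1)" if "x \<in> S" for x
    using M that mat_delete_carrier unfolding polynomial_mat_on_def by blast
  fix a b assume ab: "a < k - 1" "b < k - 1"
  let ?a = "if a < i then a else Suc a" and ?b = "if b < j then b else Suc b"
  have "polynomial_on C S (\<lambda>x. M x $$ (?a, ?b))"
    using M ab unfolding polynomial_mat_on_def by auto
  then show "polynomial_on C S (\<lambda>x. mat_delete (M x) i j $$ (a, b))"
  proof (rule polynomial_on_cong)
    fix x assume "x \<in> S"
    with M have "M x \<in> carrier_mat k k" unfolding polynomial_mat_on_def by blast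
    with ab show "M x $$ (?a, ?b) = mat_delete (M x) i j $$ (a, b)"
      by (simp add: mat_delete_def)
  qed
qed

lemma rational_mat_on_minv:
  assumes M: "polynomial_mat_on C S k k M" and inv: "\<And>x. x \<in> S \<Longrightarrow> invertible_mat (M x)"
  shows "rational_mat_on C S k k (\<lambda>x. minv (M x))"
  unfolding rational_mat_on_def
proof (intro conjI ballI allI impI)
  have car: "M x \<in> carrier_mat k k" if "x \<in> S" for x
    using M that unfolding polynomial_mat_on_def by blast
  show "minv (M x) \<in> carrier_mat k k" if "x \<in> S" for x
    using minv_mat(1)[OF car inv] that by blast
  fix i j assume ij: "i < k" "j < k"
  have "rational_on C S (\<lambda>x. (-1)^(j+i) * det (mat_delete (M x) j i) / det (M x))"
  proof (rule rational_on_divide)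
    show "polynomial_on C S (\<lambda>x. (-1)^(j+i) * det (mat_delete (M x) j i))"
      using polynomial_on_det[OF polynomial_mat_on_mat_delete[OF M ij(2,1)]]
      by (intro polynomial_on_mult polynomial_on_const)
    show "polynomial_on C S (\<lambda>x. det (M x))" by (rule polynomial_on_det[OF M])
    show "det (M x) \<noteq> 0" if "x \<in> S" for x
      using invertible_det_nonzero[OF car inv] that by blast
  qed
  then show "rational_on C S (\<lambda>x. minv (M x) $$ (i,j))"
    by (rule rational_on_cong) (simp add: minv_index[OF car inv ij])
qed

lemma polys_prod_coords_fst: "p \<in> polys C \<Longrightarrow> (\<lambda>z. p (fst z)) \<in> polys (prod_coords C D)"
  by (induction rule: polys.induct) (auto intro: polys.intros simp: prod_coords_def)

lemma polys_prod_coords_snd: "p \<in> polys D \<Longrightarrow> (\<lambda>z. p (snd z)) \<in> polys (prod_coords C D)"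
  by (induction rule: polys.induct) (auto intro: polys.intros simp: prod_coords_def)

lemma polys_prod_coords_fix_fst: "p \<in> polys (prod_coords C D) \<Longrightarrow> (\<lambda>y. p (x, y)) \<in> polys D"
  by (induction rule: polys.induct) (auto intro: polys.intros simp: prod_coords_def)

lemma polynomial_on_fst:
  assumes "polynomial_on C S f"
  shows "polynomial_on (prod_coords C D) (S \<times> T) (\<lambda>z. f (fst z))"
proof -
  obtain p where "p \<in> polys C" "\<forall>x\<in>S. f x = p x" using assms unfolding polynomial_on_def by blast
  then show ?thesis unfolding polynomial_on_def
    by (intro bexI[of _ "\<lambda>z. p (fst z)"] polys_prod_coords_fst) auto
qed

lemma polynomial_on_snd:
  assumes "polynomial_on D T f"
  shows "polynomial_on (prod_coords C D) (S \<times> T) (\<lambda>z. f (snd z))"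
proof -
  obtain p where "p \<in> polys D" "\<forall>x\<in>T. f x = p x" using assms unfolding polynomial_on_def by blast
  then show ?thesis unfolding polynomial_on_def
    by (intro bexI[of _ "\<lambda>z. p (snd z)"] polys_prod_coords_snd) auto
qed

lemma polynomial_mat_on_fst:
  "polynomial_mat_on C S r c M \<Longrightarrow> polynomial_mat_on (prod_coords C D) (S \<times> T) r c (\<lambda>z. M (fst z))"
  unfolding polynomial_mat_on_def by (auto intro: polynomial_on_fst)

lemma polynomial_mat_on_snd:
  "polynomial_mat_on D T r c M \<Longrightarrow> polynomial_mat_on (prod_coords C D) (S \<times> T) r c (\<lambda>z. M (snd z))"
  unfolding polynomial_mat_on_def by (auto intro: polynomial_on_snd)

section \<open>Preimages under the projection of a trivial family\<close>

lemma zcl_subset: "zcl C X A \<subseteq> X"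
  unfolding zcl_def by auto

lemma bij_betw_preimage:
  assumes "\<And>B. B \<in> \<A> \<Longrightarrow> f ` (U \<inter> f -` B) = B" and "(\<lambda>B. U \<inter> f -` B) ` \<A> = \<B>"
  shows "bij_betw (\<lambda>B. U \<inter> f -` B) \<A> \<B>" and "\<forall>P\<in>\<B>. U \<inter> f -` (f ` P) = P"
proof -
  have "inj_on (\<lambda>B. U \<inter> f -` B) \<A>"
    by (rule inj_on_inverseI[where g = "image f"]) (use assms(1) in auto)
  then show "bij_betw (\<lambda>B. U \<inter> f -` B) \<A> \<B>"
    using assms(2) unfolding bij_betw_def by blast
  show "\<forall>P\<in>\<B>. U \<inter> f -` (f ` P) = P"
    using assms by auto
qed

locale trivial_family =
  fixes CU :: "('u \<Rightarrow> 'a::field) set" and U :: "'u set"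
    and CG :: "('g \<Rightarrow> 'a) set" and G :: "'g set"
    and CR :: "('r \<Rightarrow> 'a) set" and R :: "'r set"
    and proj :: "'u \<Rightarrow> 'r" and fibre :: "'u \<Rightarrow> 'g" and glue :: "'g \<Rightarrow> 'r \<Rightarrow> 'u"
  assumes proj_in: "V \<in> U \<Longrightarrow> proj V \<in> R"
    and fibre_in: "V \<in> U \<Longrightarrow> fibre V \<in> G"
    and glue_in: "g \<in> G \<Longrightarrow> X \<in> R \<Longrightarrow> glue g X \<in> U"
    and proj_glue: "g \<in> G \<Longrightarrow> X \<in> R \<Longrightarrow> proj (glue g X) = X"
    and fibre_glue: "g \<in> G \<Longrightarrow> X \<in> R \<Longrightarrow> fibre (glue g X) = g"
    and glue_fibre_proj: "V \<in> U \<Longrightarrow> glue (fibre V) (proj V) = V"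
    and fibre_nonempty: "G \<noteq> {}"
    and rational_proj: "c \<in> CR \<Longrightarrow> rational_on CU U (\<lambda>V. c (proj V))"
    and rational_fibre: "f \<in> CG \<Longrightarrow> rational_on CU U (\<lambda>V. f (fibre V))"
    and polynomial_glue:
      "e \<in> CU \<Longrightarrow> polynomial_on (prod_coords CG CR) (G \<times> R) (\<lambda>z. e (glue (fst z) (snd z)))"
begin

lemma image_preimage:
  assumes "B \<subseteq> R"
  shows "proj ` (U \<inter> proj -` B) = B"
proof
  obtain g where g: "g \<in> G" using fibre_nonempty by blast
  show "B \<subseteq> proj ` (U \<inter> proj -` B)"
  proof
    fix X assume "X \<in> B"
    then have "X \<in> R" "glue g X \<in> U \<inter> proj -` B"
      using assms glue_in[OF g] proj_glue[OF g] by auto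
    then show "X \<in> proj ` (U \<inter> proj -` B)"
      using proj_glue[OF g] by (metis image_eqI)
  qed
qed auto

lemma zcl_preimage_subset: "zcl CU U (U \<inter> proj -` A) \<subseteq> U \<inter> proj -` zcl CR R A"
proof
  fix V assume V: "V \<in> zcl CU U (U \<inter> proj -` A)"
  then have "V \<in> U" unfolding zcl_def by blast
  have "p (proj V) = 0" if p: "p \<in> polys CR" and "\<forall>X\<in>A. p X = 0" for p
  proof -
    obtain P Q where PQ: "P \<in> polys CU" "Q \<in> polys CU"
      and PQ_eq: "\<forall>W\<in>U. Q W \<noteq> 0 \<and> p (proj W) = P W / Q W"
      using rational_on_comp[where h = proj, OF rational_proj p] unfolding rational_on_def by blast
    have "\<forall>W\<in>U \<inter> proj -` A. P W = 0"
      using PQ_eq \<open>\<forall>X\<in>A. p X = 0\<close> by auto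
    then have "P V = 0" using V PQ(1) unfolding zcl_def by blast
    then show ?thesis using PQ_eq \<open>V \<in> U\<close> by auto
  qed
  then show "V \<in> U \<inter> proj -` zcl CR R A"
    using \<open>V \<in> U\<close> proj_in unfolding zcl_def by blast
qed

lemma zcl_preimage_supset:
  assumes "A \<subseteq> R"
  shows "U \<inter> proj -` zcl CR R A \<subseteq> zcl CU U (U \<inter> proj -` A)"
proof
  fix V assume V: "V \<in> U \<inter> proj -` zcl CR R A"
  have "f V = 0" if f: "f \<in> polys CU" and f0: "\<forall>W\<in>U \<inter> proj -` A. f W = 0" for f
  proof -
    obtain p where p: "p \<in> polys (prod_coords CG CR)"
      and p_eq: "\<forall>z\<in>G \<times> R. f (glue (fst z) (snd z)) = p z"
      using polynomial_on_comp[where h = "\<lambda>z. glue (fst z) (snd z)", OF polynomial_glue f] unfolding polynomial_on_def by blast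
    let ?g = "fibre V"
    have g: "?g \<in> G" using V fibre_in by blast
    have p0: "\<forall>X\<in>A. p (?g, X) = 0"
    proof
      fix X assume "X \<in> A"
      then have X: "X \<in> R" using assms by blast
      then have "glue ?g X \<in> U \<inter> proj -` A" using glue_in[OF g X] proj_glue[OF g X] \<open>X \<in> A\<close> by simp
      then have "f (glue ?g X) = 0" using f0 by blast
      moreover have "f (glue ?g X) = p (?g, X)" using bspec[OF p_eq, of "(?g, X)"] g X by simp
      ultimately show "p (?g, X) = 0" by simp
    qed
    have "proj V \<in> zcl CR R A" using V by simp
    then have "p (?g, proj V) = 0"
      using p0 unfolding zcl_def
      by (auto dest!: bspec[OF _ polys_prod_coords_fix_fst[where x = ?g, OF p]])
    moreover have "f (glue ?g (proj V)) = p (?g, proj V)"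
      using bspec[OF p_eq, of "(?g, proj V)"] g proj_in V by simp
    ultimately show "f V = 0"
      using glue_fibre_proj V by simp
  qed
  then show "V \<in> zcl CU U (U \<inter> proj -` A)"
    using V unfolding zcl_def by blast
qed

lemma zcl_preimage: "A \<subseteq> R \<Longrightarrow> zcl CU U (U \<inter> proj -` A) = U \<inter> proj -` zcl CR R A"
  using zcl_preimage_subset zcl_preimage_supset by blast

lemma preimage_zcls:
  assumes "\<And>A. A \<in> \<A> \<Longrightarrow> A \<subseteq> R"
  shows "(\<lambda>B. U \<inter> proj -` B) ` {zcl CR R A | A. A \<in> \<A>}
       = {zcl CU U P | P. P \<in> (\<lambda>B. U \<inter> proj -` B) ` \<A>}"
proof -
  have "\<And>A. A \<in> \<A> \<Longrightarrow> U \<inter> proj -` zcl CR R A = zcl CU U (U \<inter> proj -` A)"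
    using zcl_preimage assms by simp
  then show ?thesis
    by (simp add: Setcompr_eq_image image_image cong: image_cong)
qed

lemma preimage_var_iso:
  assumes B: "B \<subseteq> R"
  shows "var_iso CU (U \<inter> proj -` B) (prod_coords CG CR) (G \<times> B)"
proof -
  let ?Y = "U \<inter> proj -` B" and ?C = "prod_coords CG CR"
  let ?split = "\<lambda>V. (fibre V, proj V)" and ?glue = "\<lambda>z. glue (fst z) (snd z)"
  have "rational_on CU U (\<lambda>V. c (?split V))" if "c \<in> ?C" for c
    using that rational_fibre rational_proj unfolding prod_coords_def by auto
  then have "regular_fun CU ?Y (\<lambda>V. c (?split V))" if "c \<in> ?C" for c
    using that by (meson Int_lower1 rational_on_imp_regular_fun rational_on_subset)
  moreover have "?split ` ?Y \<subseteq> G \<times> B"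
    using fibre_in by auto
  ultimately have split: "regular_map CU ?Y ?C (G \<times> B) ?split"
    unfolding regular_map_def by blast
  have GB: "G \<times> B \<subseteq> G \<times> R" using B by auto
  have "regular_fun ?C (G \<times> B) (\<lambda>z. e (?glue z))" if "e \<in> CU" for e
    using polynomial_on_subset[OF polynomial_glue[OF that] GB]
    by (intro rational_on_imp_regular_fun rational_on_polynomial)
  moreover have "?glue ` (G \<times> B) \<subseteq> ?Y"
    using B glue_in proj_glue by auto
  ultimately have glue: "regular_map ?C (G \<times> B) CU ?Y ?glue"
    unfolding regular_map_def by blast
  have glue_split: "\<forall>V\<in>?Y. ?glue (?split V) = V"
    using glue_fibre_proj by simp
  have split_glue: "\<forall>z\<in>G \<times> B. ?split (?glue z) = z"
    using B fibre_glue proj_glue by auto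
  show ?thesis
    unfolding var_iso_def by (intro exI[of _ ?split] exI[of _ ?glue] conjI split glue glue_split split_glue)
qed

end

section \<open>The quiver \<open>Q\<^sup>~\<close> and the trivialization of \<open>U\<close>\<close>

lemma polynomial_mat_on_arrow:
  assumes "a \<in> qarrs Q" and "S \<subseteq> rep_space Q d"
  shows "polynomial_mat_on (rep_coords Q d) S (d (qtgt Q a)) (d (qsrc Q a)) (\<lambda>V. V a)"
  using assms unfolding polynomial_mat_on_def rep_space_def
  by (auto intro!: polynomial_on_coord simp: rep_coords_def)

locale tilde_quiver =
  fixes n :: nat and fw :: "nat \<Rightarrow> bool" and d :: "nat \<Rightarrow> nat"
begin

abbreviation "Q \<equiv> typeA n fw"
abbreviation "Qt \<equiv> tildeQ n fw"
abbreviation "dt \<equiv> tilde_dim d"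
abbreviation "W \<equiv> Wset n fw"
abbreviation "SK \<equiv> sinkW n fw"
abbreviation "SO \<equiv> sourceW n fw"
abbreviation "\<pi> \<equiv> piQ n fw"
abbreviation U :: "(nat + nat \<Rightarrow> 'a::field mat) set" where "U \<equiv> Uset n fw d"
abbreviation R :: "(nat \<Rightarrow> 'a::field mat) set" where "R \<equiv> rep_space Q d"
abbreviation G :: "(nat \<Rightarrow> 'a::field mat) set" where "G \<equiv> Gstar n fw d"

lemma sinkW_D: "i \<in> SK \<Longrightarrow> 1 \<le> i \<and> i \<le> n \<and> fw i \<and> i \<in> W \<and> i \<notin> SO"
  unfolding sinkW_def sourceW_def Wset_def by auto

lemma sourceW_D: "i \<in> SO \<Longrightarrow> 1 \<le> i \<and> i \<le> n \<and> \<not> fw i \<and> i \<in> W \<and> i \<notin> SK"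
  unfolding sinkW_def sourceW_def Wset_def by auto

lemma Wset_cases: "i \<in> W \<longleftrightarrow> i \<in> SK \<or> i \<in> SO"
  unfolding Wset_def by auto

lemma quiver_simps:
  "qverts Qt = Inl ` {0..n} \<union> Inr ` W" "qarrs Qt = Inl ` {1..n} \<union> Inr ` W"
  "qverts Q = {0..n}" "qarrs Q = {1..n}"
  "qsrc Q i = (if fw i then i - 1 else i)" "qtgt Q i = (if fw i then i else i - 1)"
  "dt (Inl i) = d i" "dt (Inr i) = d i"
  unfolding tildeQ_def typeA_def tilde_dim_def by auto

lemma tildeQ_sink: "i \<in> SK \<Longrightarrow> qsrc Qt (Inl i) = Inl (i - 1) \<and> qtgt Qt (Inl i) = Inr i
   \<and> qsrc Qt (Inr i) = Inl i \<and> qtgt Qt (Inr i) = Inr i"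
  unfolding tildeQ_def by auto

lemma tildeQ_source: "i \<in> SO \<Longrightarrow> qsrc Qt (Inl i) = Inr i \<and> qtgt Qt (Inl i) = Inl (i - 1)
   \<and> qsrc Qt (Inr i) = Inr i \<and> qtgt Qt (Inr i) = Inl i"
  using sourceW_D[of i] unfolding tildeQ_def by auto

lemma tildeQ_other: "i \<notin> W \<Longrightarrow> qsrc Qt (Inl i) = Inl (qsrc Q i) \<and> qtgt Qt (Inl i) = Inl (qtgt Q i)"
  using Wset_cases[of i] unfolding tildeQ_def by auto

lemma typeA_bounds: "i \<in> {1..n} \<Longrightarrow> qsrc Q i \<le> n \<and> qtgt Q i \<le> n"
  by (auto simp: quiver_simps)

lemma tildeQ_arrow_cases:
  assumes "a \<in> qarrs Qt"
  obtains (sink) i where "a = Inl i \<or> a = Inr i" "i \<in> SK"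
    | (source) i where "a = Inl i \<or> a = Inr i" "i \<in> SO"
    | (other) i where "a = Inl i" "i \<in> {1..n}" "i \<notin> W"
proof -
  from assms consider (gamma) i where "a = Inl i" "i \<in> {1..n}" | (delta) i where "a = Inr i" "i \<in> W"
    by (auto simp: quiver_simps)
  then show thesis using Wset_cases that by metis
qed

lemma tildeQ_arrow_verts:
  assumes "a \<in> qarrs Qt"
  shows "qsrc Qt a \<in> qverts Qt \<and> qtgt Qt a \<in> qverts Qt"
  using assms
proof (cases rule: tildeQ_arrow_cases)
  case (sink i) then show ?thesis using tildeQ_sink[of i] sinkW_D[of i] by (auto simp: quiver_simps)
next
  case (source i) then show ?thesis using tildeQ_source[of i] sourceW_D[of i] by (auto simp: quiver_simps)
next
  case (other i) then show ?thesis using tildeQ_other[of i] typeA_bounds[of i] by (auto simp: quiver_simps)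
qed

lemma U_arrow: "V \<in> U \<Longrightarrow> a \<in> qarrs Qt \<Longrightarrow> V a \<in> carrier_mat (dt (qtgt Qt a)) (dt (qsrc Qt a))"
  unfolding Uset_def rep_space_def by auto

lemma U_outside: "V \<in> U \<Longrightarrow> a \<notin> qarrs Qt \<Longrightarrow> V a = 0\<^sub>m 0 0"
  unfolding Uset_def rep_space_def by auto

lemma U_sink: "V \<in> U \<Longrightarrow> i \<in> SK \<Longrightarrow> V (Inl i) \<in> carrier_mat (d i) (d (i - 1))
   \<and> V (Inr i) \<in> carrier_mat (d i) (d i) \<and> invertible_mat (V (Inr i))"
  using sinkW_D[of i] tildeQ_sink[of i] U_arrow[of V "Inl i"] U_arrow[of V "Inr i"]
  unfolding Uset_def by (auto simp: quiver_simps)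

lemma U_source: "V \<in> U \<Longrightarrow> i \<in> SO \<Longrightarrow> V (Inl i) \<in> carrier_mat (d (i - 1)) (d i)
   \<and> V (Inr i) \<in> carrier_mat (d i) (d i) \<and> invertible_mat (V (Inr i))"
  using sourceW_D[of i] tildeQ_source[of i] U_arrow[of V "Inl i"] U_arrow[of V "Inr i"]
  unfolding Uset_def by (auto simp: quiver_simps)

lemma U_other: "V \<in> U \<Longrightarrow> i \<in> {1..n} \<Longrightarrow> i \<notin> W \<Longrightarrow> V (Inl i) \<in> carrier_mat (d (qtgt Q i)) (d (qsrc Q i))"
  using tildeQ_other[of i] U_arrow[of V "Inl i"] by (auto simp: quiver_simps)

lemma U_eqI:
  assumes "V \<in> U" "V' \<in> U" "\<And>i. i \<in> {1..n} \<Longrightarrow> V (Inl i) = V' (Inl i)"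
    "\<And>i. i \<in> W \<Longrightarrow> V (Inr i) = V' (Inr i)"
  shows "V = V'"
proof
  fix a show "V a = V' a"
    using assms U_outside[OF assms(1), of a] U_outside[OF assms(2), of a]
    by (cases "a \<in> qarrs Qt") (auto simp: quiver_simps)
qed

lemma R_arrow: "X \<in> R \<Longrightarrow> i \<in> {1..n} \<Longrightarrow> X i \<in> carrier_mat (d (qtgt Q i)) (d (qsrc Q i))"
  unfolding rep_space_def by (auto simp: quiver_simps)

lemma R_outside: "X \<in> R \<Longrightarrow> i \<notin> {1..n} \<Longrightarrow> X i = 0\<^sub>m 0 0"
  unfolding rep_space_def by (auto simp: quiver_simps)

lemma RI: "(\<And>i. i \<in> {1..n} \<Longrightarrow> X i \<in> carrier_mat (d (qtgt Q i)) (d (qsrc Q i))) \<Longrightarrow>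
   (\<And>i. i \<notin> {1..n} \<Longrightarrow> X i = 0\<^sub>m 0 0) \<Longrightarrow> X \<in> R"
  unfolding rep_space_def by (auto simp: quiver_simps)

lemma R_eqI: "X \<in> R \<Longrightarrow> X' \<in> R \<Longrightarrow> (\<And>i. i \<in> {1..n} \<Longrightarrow> X i = X' i) \<Longrightarrow> X = X'"
  by (metis R_outside ext)

lemma Gstar_vertex: "g \<in> G \<Longrightarrow> i \<in> W \<Longrightarrow> g i \<in> carrier_mat (d i) (d i) \<and> invertible_mat (g i)"
  unfolding Gstar_def by auto

lemma Gstar_outside: "g \<in> G \<Longrightarrow> i \<notin> W \<Longrightarrow> g i = 1\<^sub>m 0"
  unfolding Gstar_def by auto

lemma GL_tilde_vertex:
  "h \<in> GL Qt dt \<Longrightarrow> v \<in> qverts Qt \<Longrightarrow> h v \<in> carrier_mat (dt v) (dt v) \<and> invertible_mat (h v)"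
  unfolding GL_def by auto

lemma GL_tilde_Inl:
  "h \<in> GL Qt dt \<Longrightarrow> i \<le> n \<Longrightarrow> h (Inl i) \<in> carrier_mat (d i) (d i) \<and> invertible_mat (h (Inl i))"
  using GL_tilde_vertex[of h "Inl i"] by (auto simp: quiver_simps)

lemma GL_tilde_Inr:
  "h \<in> GL Qt dt \<Longrightarrow> i \<in> W \<Longrightarrow> h (Inr i) \<in> carrier_mat (d i) (d i) \<and> invertible_mat (h (Inr i))"
  using GL_tilde_vertex[of h "Inr i"] by (auto simp: quiver_simps)

lemma GL_vertex: "k \<in> GL Q d \<Longrightarrow> i \<le> n \<Longrightarrow> k i \<in> carrier_mat (d i) (d i) \<and> invertible_mat (k i)"
  unfolding GL_def by (auto simp: quiver_simps)

lemma GL_outside: "k \<in> GL Q d \<Longrightarrow> n < i \<Longrightarrow> k i = 1\<^sub>m 0"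
  unfolding GL_def by (auto simp: quiver_simps)

definition delta_part :: "(nat + nat \<Rightarrow> 'a::field mat) \<Rightarrow> nat \<Rightarrow> 'a mat" where
  "delta_part V = (\<lambda>i. if i \<in> W then V (Inr i) else 1\<^sub>m 0)"

definition assemble :: "(nat \<Rightarrow> 'a::field mat) \<Rightarrow> (nat \<Rightarrow> 'a mat) \<Rightarrow> nat + nat \<Rightarrow> 'a mat" where
  "assemble g X = (\<lambda>a. case a of
      Inl i \<Rightarrow> (if i \<in> {1..n} then (if i \<in> SK then g i * X i else if i \<in> SO then X i * g i else X i)
               else 0\<^sub>m 0 0)
    | Inr i \<Rightarrow> (if i \<in> W then g i else 0\<^sub>m 0 0))"

lemma pi_in_R: assumes V: "V \<in> U" shows "\<pi> V \<in> R"
proof (rule RI)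
  fix i assume i: "i \<in> {1..n}"
  consider (sink) "i \<in> SK" | (source) "i \<in> SO" | (other) "i \<notin> W" using Wset_cases by blast
  then show "\<pi> V i \<in> carrier_mat (d (qtgt Q i)) (d (qsrc Q i))"
  proof cases
    case sink then show ?thesis
      using U_sink[OF V sink] minv_mat(1)[of "V (Inr i)" "d i"] sinkW_D[OF sink] i
      by (auto simp: piQ_def quiver_simps intro!: mult_carrier_mat)
  next
    case source then show ?thesis
      using U_source[OF V source] minv_mat(1)[of "V (Inr i)" "d i"] sourceW_D[OF source] i
      by (auto simp: piQ_def quiver_simps intro!: mult_carrier_mat)
  next
    case other then show ?thesis
      using U_other[OF V i other] Wset_cases[of i] i by (auto simp: piQ_def)
  qed
qed (simp add: piQ_def del: atLeastAtMost_iff)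

lemma delta_part_in_Gstar: "V \<in> U \<Longrightarrow> delta_part V \<in> G"
  using U_sink U_source Wset_cases unfolding Gstar_def delta_part_def by fastforce

lemma Gstar_nonempty: "G \<noteq> {}"
proof -
  have "(\<lambda>i. if i \<in> W then 1\<^sub>m (d i) else 1\<^sub>m 0) \<in> G"
    unfolding Gstar_def using invertible_one_mat by auto
  then show ?thesis by blast
qed

lemma assemble_in_U: assumes g: "g \<in> G" and X: "X \<in> R" shows "assemble g X \<in> U"
  unfolding Uset_def rep_space_def
proof (intro CollectI conjI ballI allI impI)
  fix a assume "a \<in> qarrs Qt"
  then show "assemble g X a \<in> carrier_mat (dt (qtgt Qt a)) (dt (qsrc Qt a))"
  proof (cases rule: tildeQ_arrow_cases)
    case (sink i) then show ?thesis
      using sinkW_D[of i] tildeQ_sink[of i] Gstar_vertex[OF g, of i] R_arrow[OF X, of i]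
      by (auto simp: assemble_def quiver_simps intro!: mult_carrier_mat)
  next
    case (source i) then show ?thesis
      using sourceW_D[of i] tildeQ_source[of i] Gstar_vertex[OF g, of i] R_arrow[OF X, of i]
      by (auto simp: assemble_def quiver_simps intro!: mult_carrier_mat)
  next
    case (other i) then show ?thesis
      using tildeQ_other[of i] R_arrow[OF X, of i] Wset_cases[of i]
      by (auto simp: assemble_def quiver_simps)
  qed
next
  fix a assume "a \<notin> qarrs Qt"
  then show "assemble g X a = 0\<^sub>m 0 0"
    by (cases a) (auto simp: assemble_def quiver_simps simp del: atLeastAtMost_iff)
next
  fix i assume "i \<in> W"
  then show "invertible_mat (assemble g X (Inr i))"
    using Gstar_vertex[OF g] by (simp add: assemble_def)
qed

lemma pi_assemble: assumes g: "g \<in> G" and X: "X \<in> R" shows "\<pi> (assemble g X) = X"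
proof (rule R_eqI[OF pi_in_R[OF assemble_in_U[OF g X]] X])
  fix i assume i: "i \<in> {1..n}"
  consider (sink) "i \<in> SK" | (source) "i \<in> SO" | (other) "i \<notin> W" using Wset_cases by blast
  then show "\<pi> (assemble g X) i = X i"
  proof cases
    case sink then show ?thesis
      using sinkW_D[OF sink] Gstar_vertex[OF g, of i] R_arrow[OF X i] i
        minv_cancel(1)[of "g i" "d i" "X i"]
      by (auto simp: piQ_def assemble_def quiver_simps)
  next
    case source then show ?thesis
      using sourceW_D[OF source] Gstar_vertex[OF g, of i] R_arrow[OF X i] i
        minv_cancel(3)[of "g i" "d i" "X i"]
      by (auto simp: piQ_def assemble_def quiver_simps)
  next
    case other then show ?thesis using i Wset_cases[of i] by (auto simp: piQ_def assemble_def)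
  qed
qed

lemma delta_part_assemble: "g \<in> G \<Longrightarrow> delta_part (assemble g X) = g"
  using Gstar_outside unfolding delta_part_def assemble_def by fastforce

lemma assemble_delta_part_pi: assumes V: "V \<in> U" shows "assemble (delta_part V) (\<pi> V) = V"
proof (rule U_eqI[OF assemble_in_U[OF delta_part_in_Gstar[OF V] pi_in_R[OF V]] V])
  fix i assume i: "i \<in> {1..n}"
  consider (sink) "i \<in> SK" | (source) "i \<in> SO" | (other) "i \<notin> W" using Wset_cases by blast
  then show "assemble (delta_part V) (\<pi> V) (Inl i) = V (Inl i)"
  proof cases
    case sink then show ?thesis
      using sinkW_D[OF sink] U_sink[OF V sink] i minv_cancel(2)[of "V (Inr i)" "d i" "V (Inl i)"]
      by (auto simp: piQ_def assemble_def delta_part_def)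
  next
    case source then show ?thesis
      using sourceW_D[OF source] U_source[OF V source] i minv_cancel(4)[of "V (Inr i)" "d i" "V (Inl i)"]
      by (auto simp: piQ_def assemble_def delta_part_def)
  next
    case other then show ?thesis using i Wset_cases[of i] by (auto simp: piQ_def assemble_def)
  qed
qed (simp add: assemble_def delta_part_def)

abbreviation "CU \<equiv> rep_coords Qt dt"
abbreviation "CR \<equiv> rep_coords Q d"
abbreviation "CG \<equiv> Gstar_coords n fw d"

lemma polynomial_mat_on_U_arrow:
  "a \<in> qarrs Qt \<Longrightarrow> polynomial_mat_on CU U (dt (qtgt Qt a)) (dt (qsrc Qt a)) (\<lambda>V. V a)"
  by (rule polynomial_mat_on_arrow) (auto simp: Uset_def)

lemma polynomial_mat_on_R_arrow:
  "a \<in> {1..n} \<Longrightarrow> polynomial_mat_on CR R (d (qtgt Q a)) (d (qsrc Q a)) (\<lambda>X. X a)"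
  by (rule polynomial_mat_on_arrow) (auto simp: quiver_simps)

lemma polynomial_mat_on_Gstar:
  "i \<in> W \<Longrightarrow> polynomial_mat_on CG G (d i) (d i) (\<lambda>g. g i)"
  unfolding polynomial_mat_on_def Gstar_def
  by (auto intro!: polynomial_on_coord simp: Gstar_coords_def)

lemma rational_mat_on_pi:
  assumes a: "a \<in> {1..n}"
  shows "rational_mat_on CU U (d (qtgt Q a)) (d (qsrc Q a)) (\<lambda>V. \<pi> V a)"
proof -
  have \<gamma>: "polynomial_mat_on CU U (dt (qtgt Qt (Inl a))) (dt (qsrc Qt (Inl a))) (\<lambda>V. V (Inl a))"
    using a by (intro polynomial_mat_on_U_arrow) (simp add: quiver_simps)
  consider (sink) "a \<in> SK" | (source) "a \<in> SO" | (other) "a \<notin> W" using Wset_cases by blast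
  then show ?thesis
  proof cases
    case sink
    have \<delta>: "polynomial_mat_on CU U (d a) (d a) (\<lambda>V. V (Inr a))"
      using polynomial_mat_on_U_arrow[of "Inr a"] sink sinkW_D tildeQ_sink by (simp add: quiver_simps)
    have "rational_mat_on CU U (d a) (d (a - 1)) (\<lambda>V. minv (V (Inr a)) * V (Inl a))"
    proof -
      have \<gamma>': "polynomial_mat_on CU U (d a) (d (a - 1)) (\<lambda>V. V (Inl a))"
        using \<gamma> tildeQ_sink[OF sink] by (simp add: quiver_simps)
      have "\<And>V. V \<in> U \<Longrightarrow> invertible_mat (V (Inr a))" using U_sink[OF _ sink] by blast
      then show ?thesis by (rule rational_mat_on_mult[OF rational_mat_on_minv[OF \<delta>] rational_mat_on_polynomial[OF \<gamma>']])
    qed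
    then show ?thesis using a sink sinkW_D[OF sink] by (simp add: piQ_def quiver_simps)
  next
    case source
    have \<delta>: "polynomial_mat_on CU U (d a) (d a) (\<lambda>V. V (Inr a))"
      using polynomial_mat_on_U_arrow[of "Inr a"] source sourceW_D tildeQ_source by (simp add: quiver_simps)
    have "rational_mat_on CU U (d (a - 1)) (d a) (\<lambda>V. V (Inl a) * minv (V (Inr a)))"
    proof -
      have \<gamma>': "polynomial_mat_on CU U (d (a - 1)) (d a) (\<lambda>V. V (Inl a))"
        using \<gamma> tildeQ_source[OF source] by (simp add: quiver_simps)
      have "\<And>V. V \<in> U \<Longrightarrow> invertible_mat (V (Inr a))" using U_source[OF _ source] by blast
      then show ?thesis by (rule rational_mat_on_mult[OF rational_mat_on_polynomial[OF \<gamma>'] rational_mat_on_minv[OF \<delta>]])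
    qed
    then show ?thesis using a source sourceW_D[OF source] by (simp add: piQ_def quiver_simps)
  next
    case other
    then show ?thesis
      using a rational_mat_on_polynomial[OF \<gamma>] tildeQ_other[OF other] Wset_cases[of a]
      by (simp add: piQ_def quiver_simps)
  qed
qed

lemma polynomial_mat_on_assemble:
  assumes b: "b \<in> qarrs Qt"
  shows "polynomial_mat_on (prod_coords CG CR) (G \<times> R) (dt (qtgt Qt b)) (dt (qsrc Qt b))
           (\<lambda>z. assemble (fst z) (snd z) b)"
proof -
  have g: "polynomial_mat_on (prod_coords CG CR) (G \<times> R) (d i) (d i) (\<lambda>z. fst z i)" if "i \<in> W" for i
    using polynomial_mat_on_fst[OF polynomial_mat_on_Gstar[OF that]] .
  have X: "polynomial_mat_on (prod_coords CG CR) (G \<times> R) (d (qtgt Q i)) (d (qsrc Q i)) (\<lambda>z. snd z i)"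
    if "i \<in> {1..n}" for i
    using polynomial_mat_on_snd[OF polynomial_mat_on_R_arrow[OF that]] .
  from b show ?thesis
  proof (cases rule: tildeQ_arrow_cases)
    case (sink i)
    note i = sinkW_D[OF sink(2)] tildeQ_sink[OF sink(2)]
    have "polynomial_mat_on (prod_coords CG CR) (G \<times> R) (d i) (d (i - 1)) (\<lambda>z. snd z i)"
      using X[of i] i by (simp add: quiver_simps)
    from polynomial_mat_on_mult[OF g this]
    have "polynomial_mat_on (prod_coords CG CR) (G \<times> R) (d i) (d (i - 1)) (\<lambda>z. fst z i * snd z i)"
      using i by simp
    with sink i g[of i] show ?thesis by (auto simp: assemble_def quiver_simps)
  next
    case (source i)
    note i = sourceW_D[OF source(2)] tildeQ_source[OF source(2)]
    have "polynomial_mat_on (prod_coords CG CR) (G \<times> R) (d (i - 1)) (d i) (\<lambda>z. snd z i)"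
      using X[of i] i by (simp add: quiver_simps)
    from polynomial_mat_on_mult[OF this g]
    have "polynomial_mat_on (prod_coords CG CR) (G \<times> R) (d (i - 1)) (d i) (\<lambda>z. snd z i * fst z i)"
      using i by simp
    with source i g[of i] show ?thesis by (auto simp: assemble_def quiver_simps)
  next
    case (other i)
    with X[of i] tildeQ_other[of i] Wset_cases[of i] show ?thesis
      by (simp add: assemble_def quiver_simps)
  qed
qed

lemma trivial_family: "trivial_family CU U CG G CR R \<pi> delta_part assemble"
proof
  show "rational_on CU U (\<lambda>V. c (\<pi> V))" if "c \<in> CR" for c
    using that rational_mat_on_pi unfolding rep_coords_def rational_mat_on_def
    by (auto simp: quiver_simps)
  show "rational_on CU U (\<lambda>V. f (delta_part V))" if "f \<in> CG" for f
  proof -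
    obtain i r s where i: "i \<in> W" "r < d i" "s < d i" and f: "f = (\<lambda>g. g i $$ (r, s))"
      using \<open>f \<in> CG\<close> unfolding Gstar_coords_def by blast
    have "polynomial_mat_on CU U (d i) (d i) (\<lambda>V. V (Inr i))"
      using polynomial_mat_on_U_arrow[of "Inr i"] i Wset_cases[of i] tildeQ_sink[of i] tildeQ_source[of i]
      by (auto simp: quiver_simps)
    with i f show ?thesis
      unfolding polynomial_mat_on_def delta_part_def by (auto intro: rational_on_polynomial)
  qed
  show "polynomial_on (prod_coords CG CR) (G \<times> R) (\<lambda>z. e (assemble (fst z) (snd z)))"
    if "e \<in> CU" for e
  proof -
    obtain b i j where b: "b \<in> qarrs Qt" "i < dt (qtgt Qt b)" "j < dt (qsrc Qt b)"
      and e: "e = (\<lambda>V. V b $$ (i, j))"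
      using \<open>e \<in> CU\<close> unfolding rep_coords_def by blast
    with polynomial_mat_on_assemble[OF b(1)] show ?thesis
      unfolding polynomial_mat_on_def by blast
  qed
qed (simp_all add: pi_in_R delta_part_in_Gstar assemble_in_U pi_assemble delta_part_assemble
    assemble_delta_part_pi Gstar_nonempty)

subsection \<open>Orbits\<close>

definition base_part :: "(nat + nat \<Rightarrow> 'a::field mat) \<Rightarrow> nat \<Rightarrow> 'a mat" where
  "base_part h = (\<lambda>i. if i \<le> n then h (Inl i) else 1\<^sub>m 0)"

lemma base_part_GL: "h \<in> GL Qt dt \<Longrightarrow> base_part h \<in> GL Q d"
  using GL_tilde_Inl[of h] unfolding GL_def base_part_def by (auto simp: quiver_simps)

lemma act_in_U: assumes V: "V \<in> U" and h: "h \<in> GL Qt dt" shows "act Qt h V \<in> U"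
  unfolding Uset_def rep_space_def
proof (intro CollectI conjI ballI allI impI)
  fix a assume a: "a \<in> qarrs Qt"
  note hv = GL_tilde_vertex[OF h tildeQ_arrow_verts[OF a, THEN conjunct1]]
    GL_tilde_vertex[OF h tildeQ_arrow_verts[OF a, THEN conjunct2]]
  show "act Qt h V a \<in> carrier_mat (dt (qtgt Qt a)) (dt (qsrc Qt a))"
    using a hv U_arrow[OF V a] minv_mat(1)[of "h (qsrc Qt a)" "dt (qsrc Qt a)"]
    by (auto simp: act_def intro!: mult_carrier_mat)
next
  fix a assume "a \<notin> qarrs Qt"
  then show "act Qt h V a = 0\<^sub>m 0 0" using U_outside[OF V] by (simp add: act_def)
next
  fix i assume i: "i \<in> W"
  then have a: "Inr i \<in> qarrs Qt" by (simp add: quiver_simps)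
  have dims: "dt (qtgt Qt (Inr i)) = d i" "dt (qsrc Qt (Inr i)) = d i"
    using Wset_cases[of i] i tildeQ_sink[of i] tildeQ_source[of i] by (auto simp: quiver_simps)
  show "invertible_mat (act Qt h V (Inr i))"
    using a GL_tilde_vertex[OF h tildeQ_arrow_verts[OF a, THEN conjunct1]]
      GL_tilde_vertex[OF h tildeQ_arrow_verts[OF a, THEN conjunct2]]
      U_arrow[OF V a] i V dims
    by (auto simp: act_def Uset_def intro!: invertible_conj[where k = "d i"])
qed

lemma act_in_R: assumes X: "X \<in> R" and k: "k \<in> GL Q d" shows "act Q k X \<in> R"
proof (rule RI)
  fix i assume i: "i \<in> {1..n}"
  then show "act Q k X i \<in> carrier_mat (d (qtgt Q i)) (d (qsrc Q i))"
    using R_arrow[OF X i] GL_vertex[OF k, of "qtgt Q i"] GL_vertex[OF k, of "qsrc Q i"] typeA_bounds[OF i]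
      minv_mat(1)[of "k (qsrc Q i)" "d (qsrc Q i)"]
    by (auto simp: act_def quiver_simps intro!: mult_carrier_mat)
next
  fix i assume "i \<notin> {1..n}"
  then show "act Q k X i = 0\<^sub>m 0 0"
    using R_outside[OF X] by (simp add: act_def quiver_simps del: atLeastAtMost_iff)
qed

lemma orbit_subset_R: "X \<in> R \<Longrightarrow> orbit Q d X \<subseteq> R"
  using act_in_R unfolding orbit_def by blast

lemma pi_act:
  assumes V: "V \<in> U" and h: "h \<in> GL Qt dt"
  shows "\<pi> (act Qt h V) = act Q (base_part h) (\<pi> V)"
proof (rule R_eqI[OF pi_in_R[OF act_in_U[OF V h]] act_in_R[OF pi_in_R[OF V] base_part_GL[OF h]]])
  fix i assume i: "i \<in> {1..n}"
  have i1: "i - 1 \<le> n" using i by auto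
  consider (sink) "i \<in> SK" | (source) "i \<in> SO" | (other) "i \<notin> W" using Wset_cases by blast
  then show "\<pi> (act Qt h V) i = act Q (base_part h) (\<pi> V) i"
  proof cases
    case sink
    note s = sinkW_D[OF sink] tildeQ_sink[OF sink]
    have "\<pi> (act Qt h V) i
        = minv (h (Inr i) * V (Inr i) * minv (h (Inl i))) * (h (Inr i) * V (Inl i) * minv (h (Inl (i - 1))))"
      using s sink i i1 by (simp add: piQ_def act_def quiver_simps)
    also have "\<dots> = h (Inl i) * (minv (V (Inr i)) * V (Inl i)) * minv (h (Inl (i - 1)))"
      using GL_tilde_Inr[OF h, of i] GL_tilde_Inl[OF h, of i] GL_tilde_Inl[OF h, of "i - 1"] U_sink[OF V sink] s i1
      by (intro minv_conj_mult_conj) auto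
    also have "\<dots> = act Q (base_part h) (\<pi> V) i"
      using s sink i i1 by (simp add: piQ_def act_def quiver_simps base_part_def)
    finally show ?thesis .
  next
    case source
    note s = sourceW_D[OF source] tildeQ_source[OF source]
    have "\<pi> (act Qt h V) i
        = (h (Inl (i - 1)) * V (Inl i) * minv (h (Inr i))) * minv (h (Inl i) * V (Inr i) * minv (h (Inr i)))"
      using s source i i1 by (simp add: piQ_def act_def quiver_simps)
    also have "\<dots> = h (Inl (i - 1)) * (V (Inl i) * minv (V (Inr i))) * minv (h (Inl i))"
      using GL_tilde_Inr[OF h, of i] GL_tilde_Inl[OF h, of i] GL_tilde_Inl[OF h, of "i - 1"] U_source[OF V source] s i1
      by (intro conj_mult_minv_conj) auto
    also have "\<dots> = act Q (base_part h) (\<pi> V) i"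
      using s source i i1 by (simp add: piQ_def act_def quiver_simps base_part_def)
    finally show ?thesis .
  next
    case other
    then show ?thesis using i typeA_bounds[OF i] tildeQ_other[OF other] Wset_cases[of i]
      by (simp add: piQ_def act_def quiver_simps base_part_def)
  qed
qed

lemma GL_tildeI:
  assumes "\<And>v. v \<in> qverts Qt \<Longrightarrow> h v \<in> carrier_mat (dt v) (dt v) \<and> invertible_mat (h v)"
    and "\<And>v. v \<notin> qverts Qt \<Longrightarrow> h v = 1\<^sub>m 0"
  shows "h \<in> GL Qt dt"
  using assms unfolding GL_def by blast

text \<open>This acts by \<open>k\<close> at the vertices \<open>z\<^sub>i\<close>; at \<open>w\<^sub>i\<close> it is chosen so that it moves the arrow
  \<open>\<delta>\<^sub>i = g\<^sub>i\<close> to \<open>g'\<^sub>i\<close>.\<close>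

definition lift_GL :: "(nat \<Rightarrow> 'a::field mat) \<Rightarrow> (nat \<Rightarrow> 'a mat) \<Rightarrow> (nat \<Rightarrow> 'a mat) \<Rightarrow> nat + nat \<Rightarrow> 'a mat"
  where "lift_GL k g g' = (\<lambda>v. case v of
      Inl i \<Rightarrow> k i
    | Inr i \<Rightarrow> if i \<in> SK then g' i * k i * minv (g i)
              else if i \<in> SO then minv (g' i) * k i * g i else 1\<^sub>m 0)"

lemma GL_vertex_Wset: "k \<in> GL Q d \<Longrightarrow> i \<in> W \<Longrightarrow> k i \<in> carrier_mat (d i) (d i) \<and> invertible_mat (k i)"
  using GL_vertex Wset_cases sinkW_D sourceW_D by blast

lemma lift_GL_in_GL:
  assumes k: "k \<in> GL Q d" and g: "g \<in> G" and g': "g' \<in> G"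
  shows "lift_GL k g g' \<in> GL Qt dt"
proof (rule GL_tildeI)
  fix v assume "v \<in> qverts Qt"
  then consider (z) i where "v = Inl i" "i \<le> n" | (sink) i where "v = Inr i" "i \<in> SK"
    | (source) i where "v = Inr i" "i \<in> SO"
    using Wset_cases by (auto simp: quiver_simps)
  then show "lift_GL k g g' v \<in> carrier_mat (dt v) (dt v) \<and> invertible_mat (lift_GL k g g' v)"
  proof cases
    case z then show ?thesis using GL_vertex[OF k] by (simp add: lift_GL_def quiver_simps)
  next
    case sink
    with Gstar_vertex[OF g, of i] Gstar_vertex[OF g', of i] GL_vertex_Wset[OF k, of i] sinkW_D[of i]
    show ?thesis
      using minv_mult3(1)[of "g' i" "d i" "k i" "minv (g i)"] minv_mat(1)[of "g i" "d i"]
        minv_minv(1)[of "g i" "d i"]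
      by (auto simp: lift_GL_def quiver_simps intro!: mult_carrier_mat)
  next
    case source
    with Gstar_vertex[OF g, of i] Gstar_vertex[OF g', of i] GL_vertex_Wset[OF k, of i] sourceW_D[of i]
    show ?thesis
      using minv_mult3(1)[of "minv (g' i)" "d i" "k i" "g i"] minv_mat(1)[of "g' i" "d i"]
        minv_minv(1)[of "g' i" "d i"]
      by (auto simp: lift_GL_def quiver_simps intro!: mult_carrier_mat)
  qed
next
  fix v assume "v \<notin> qverts Qt"
  then show "lift_GL k g g' v = 1\<^sub>m 0"
    using GL_outside[OF k] Wset_cases by (cases v) (auto simp: lift_GL_def quiver_simps image_iff)
qed

lemma base_part_lift_GL: assumes "k \<in> GL Q d" shows "base_part (lift_GL k g g') = k"
  using GL_outside[OF assms] by (auto simp: base_part_def lift_GL_def)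

lemma delta_part_act_lift_GL:
  assumes k: "k \<in> GL Q d" and g: "g \<in> G" and g': "g' \<in> G"
  shows "delta_part (act Qt (lift_GL k g g') (assemble g X)) = g'"
proof
  fix i show "delta_part (act Qt (lift_GL k g g') (assemble g X)) i = g' i"
  proof (cases "i \<in> W")
    case False
    then show ?thesis using Gstar_outside[OF g'] by (simp add: delta_part_def)
  next
    case True
    note mats = Gstar_vertex[OF g True] Gstar_vertex[OF g' True] GL_vertex_Wset[OF k True]
    consider (sink) "i \<in> SK" | (source) "i \<in> SO" using True Wset_cases by blast
    then show ?thesis
    proof cases
      case sink
      have "delta_part (act Qt (lift_GL k g g') (assemble g X)) i
          = g' i * k i * minv (g i) * g i * minv (k i)"
        using sink True tildeQ_sink[OF sink]
        by (simp add: delta_part_def act_def lift_GL_def assemble_def quiver_simps)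
      also have "\<dots> = g' i"
        using mats by (auto simp: minv_cancel(3,4))
      finally show ?thesis .
    next
      case source
      have "delta_part (act Qt (lift_GL k g g') (assemble g X)) i
          = k i * g i * minv (minv (g' i) * k i * g i)"
        using source True tildeQ_source[OF source] sourceW_D[OF source]
        by (simp add: delta_part_def act_def lift_GL_def assemble_def quiver_simps)
      also have "\<dots> = g' i"
        by (rule mult_minv_conj_cancel) (use mats in auto)
      finally show ?thesis .
    qed
  qed
qed

lemma act_lift_GL_assemble:
  assumes k: "k \<in> GL Q d" and g: "g \<in> G" and g': "g' \<in> G" and X: "X \<in> R"
  shows "act Qt (lift_GL k g g') (assemble g X) = assemble g' (act Q k X)"
proof -
  note h = lift_GL_in_GL[OF k g g']
  have "act Qt (lift_GL k g g') (assemble g X) \<in> U"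
    by (rule act_in_U[OF assemble_in_U[OF g X] h])
  moreover have "\<pi> (act Qt (lift_GL k g g') (assemble g X)) = act Q k X"
    using pi_act[OF assemble_in_U[OF g X] h] pi_assemble[OF g X] base_part_lift_GL[OF k] by simp
  ultimately show ?thesis
    using assemble_delta_part_pi delta_part_act_lift_GL[OF k g g'] by metis
qed

lemma orbit_preimage:
  assumes V: "V \<in> U"
  shows "U \<inter> \<pi> -` orbit Q d (\<pi> V) = orbit Qt dt V"
proof
  show "orbit Qt dt V \<subseteq> U \<inter> \<pi> -` orbit Q d (\<pi> V)"
    using act_in_U[OF V] pi_act[OF V] base_part_GL unfolding orbit_def by blast
  show "U \<inter> \<pi> -` orbit Q d (\<pi> V) \<subseteq> orbit Qt dt V"
  proof
    fix V' assume V': "V' \<in> U \<inter> \<pi> -` orbit Q d (\<pi> V)"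
    then obtain k where k: "k \<in> GL Q d" and \<pi>V': "\<pi> V' = act Q k (\<pi> V)"
      unfolding orbit_def by blast
    have "V' \<in> U" using V' by blast
    let ?h = "lift_GL k (delta_part V) (delta_part V')"
    have "act Qt ?h V = V'"
      using act_lift_GL_assemble[OF k delta_part_in_Gstar[OF V] delta_part_in_Gstar[OF \<open>V' \<in> U\<close>]
          pi_in_R[OF V]]
      unfolding assemble_delta_part_pi[OF V] \<pi>V'[symmetric] assemble_delta_part_pi[OF \<open>V' \<in> U\<close>] .
    with lift_GL_in_GL[OF k delta_part_in_Gstar[OF V] delta_part_in_Gstar[OF \<open>V' \<in> U\<close>]]
    show "V' \<in> orbit Qt dt V"
      unfolding orbit_def by force
  qed
qed

lemma orbits_in_subset_R: "Ob \<in> orbits_in Q d R \<Longrightarrow> Ob \<subseteq> R"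
  using orbit_subset_R unfolding orbits_in_def by blast

lemma preimage_orbits_in:
  "(\<lambda>Ob. U \<inter> \<pi> -` Ob) ` orbits_in Q d R = orbits_in Qt dt (U :: (nat + nat \<Rightarrow> 'a::field mat) set)"
proof (intro equalityI subsetI)
  fix P :: "(nat + nat \<Rightarrow> 'a mat) set"
  assume "P \<in> (\<lambda>Ob. U \<inter> \<pi> -` Ob) ` orbits_in Q d R"
  then obtain X :: "nat \<Rightarrow> 'a mat" where X: "X \<in> R" and P: "P = U \<inter> \<pi> -` orbit Q d X"
    unfolding orbits_in_def by blast
  obtain g :: "nat \<Rightarrow> 'a mat" where g: "g \<in> G" using Gstar_nonempty by blast
  have "P = orbit Qt dt (assemble g X)"
    using orbit_preimage[OF assemble_in_U[OF g X]] pi_assemble[OF g X] P by simp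
  then show "P \<in> orbits_in Qt dt U"
    using assemble_in_U[OF g X] unfolding orbits_in_def by blast
next
  fix P :: "(nat + nat \<Rightarrow> 'a mat) set"
  assume "P \<in> orbits_in Qt dt U"
  then obtain V where V: "V \<in> U" and P: "P = orbit Qt dt V"
    unfolding orbits_in_def by blast
  have "orbit Q d (\<pi> V) \<in> orbits_in Q d R"
    using pi_in_R[OF V] unfolding orbits_in_def by blast
  with orbit_preimage[OF V] P show "P \<in> (\<lambda>Ob. U \<inter> \<pi> -` Ob) ` orbits_in Q d R"
    by (metis image_eqI)
qed

end

theorem theorem5p3:
  fixes n :: nat and fw :: "nat \<Rightarrow> bool" and d :: "nat \<Rightarrow> nat"
  defines "Q \<equiv> typeA n fw" and "Qt \<equiv> tildeQ n fw" and "dt \<equiv> tilde_dim d"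
  defines "U \<equiv> (Uset n fw d :: (nat + nat \<Rightarrow> 'a::field mat) set)" and "\<pi> \<equiv> piQ n fw"
  defines "R \<equiv> (rep_space Q d :: (nat \<Rightarrow> 'a mat) set)"
  defines "CR \<equiv> rep_coords Q d" and "CU \<equiv> rep_coords Qt dt"
  shows
    "bij_betw (\<lambda>Ob. U \<inter> \<pi> -` Ob) (orbits_in Q d R) (orbits_in Qt dt U)
     \<and> (\<forall>Ob \<in> orbits_in Q d R. \<pi> ` (U \<inter> \<pi> -` Ob) = Ob)
     \<and> (\<forall>P \<in> orbits_in Qt dt U. U \<inter> \<pi> -` (\<pi> ` P) = P)
     \<and> bij_betw (\<lambda>C. U \<inter> \<pi> -` C)
         {zcl CR R Ob | Ob. Ob \<in> orbits_in Q d R}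
         {zcl CU U P | P. P \<in> orbits_in Qt dt U}
     \<and> (\<forall>Ob \<in> orbits_in Q d R. \<pi> ` (U \<inter> \<pi> -` (zcl CR R Ob)) = zcl CR R Ob)
     \<and> (\<forall>P \<in> orbits_in Qt dt U. U \<inter> \<pi> -` (\<pi> ` (zcl CU U P)) = zcl CU U P)
     \<and> (\<forall>Ob \<in> orbits_in Q d R.
          var_iso CU (zcl CU U (U \<inter> \<pi> -` Ob))
                  (prod_coords (Gstar_coords n fw d) CR) (Gstar n fw d \<times> zcl CR R Ob))"
proof -
  interpret T: tilde_quiver n fw d .
  interpret trivial_family CU U "Gstar_coords n fw d" "Gstar n fw d" CR R \<pi> T.delta_part T.assemble
    unfolding assms by (rule T.trivial_family)
  have orbits: "(\<lambda>Ob. U \<inter> \<pi> -` Ob) ` orbits_in Q d R = orbits_in Qt dt U"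
    unfolding assms by (rule T.preimage_orbits_in)
  have orbits_sub: "\<And>Ob. Ob \<in> orbits_in Q d R \<Longrightarrow> Ob \<subseteq> R"
    unfolding assms by (rule T.orbits_in_subset_R)
  have closures: "(\<lambda>C. U \<inter> \<pi> -` C) ` {zcl CR R Ob | Ob. Ob \<in> orbits_in Q d R}
      = {zcl CU U P | P. P \<in> orbits_in Qt dt U}"
    using preimage_zcls[OF orbits_sub] orbits by simp
  note orbits_bij = bij_betw_preimage[OF image_preimage[OF orbits_sub] orbits]
  have "\<And>C. C \<in> {zcl CR R Ob | Ob. Ob \<in> orbits_in Q d R} \<Longrightarrow> \<pi> ` (U \<inter> \<pi> -` C) = C"
    using image_preimage[OF zcl_subset] by blast
  note closures_bij = bij_betw_preimage[OF this closures]
  show ?thesis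
  proof (intro conjI ballI)
    fix Ob assume Ob: "Ob \<in> orbits_in Q d R"
    show "\<pi> ` (U \<inter> \<pi> -` Ob) = Ob" by (rule image_preimage[OF orbits_sub[OF Ob]])
    show "\<pi> ` (U \<inter> \<pi> -` zcl CR R Ob) = zcl CR R Ob" by (rule image_preimage[OF zcl_subset])
    show "var_iso CU (zcl CU U (U \<inter> \<pi> -` Ob)) (prod_coords (Gstar_coords n fw d) CR)
        (Gstar n fw d \<times> zcl CR R Ob)"
      unfolding zcl_preimage[OF orbits_sub[OF Ob]] by (rule preimage_var_iso[OF zcl_subset])
  next
    fix P assume P: "P \<in> orbits_in Qt dt U"
    show "U \<inter> \<pi> -` (\<pi> ` P) = P"
      using orbits_bij(2) P by blast
    have "zcl CU U P \<in> {zcl CU U P | P. P \<in> orbits_in Qt dt U}" using P by blast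
    then show "U \<inter> \<pi> -` (\<pi> ` zcl CU U P) = zcl CU U P"
      using closures_bij(2) by blast
  qed (simp_all only: orbits_bij(1) closures_bij(1))
qed

end
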